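(* Let $R$ be a finite local ring and let $\phi,\psi$ be non-trivial additive characters of $R$. (i) If $\phi$ and $\psi$ have different conductors, then $K(\phi,\psi)=0$. (ii) If $\phi$ and $\psi$ both have conductor $I$, then $K(\phi,\psi)=|I|\,K(\phi',\psi')$, where $\phi',\psi'$ are the primitive characters of $R/I$ inducing $\phi,\psi$, and $K(\phi',\psi')$ is the Kloosterman sum over $R/I$.
   Context: All rings are finite and commutative with identity; $S^\times$ is the unit group of a ring $S$. An additive character is a homomorphism $(S,+)\to\mathbb{C}^*$; its conductor is the largest ideal on which it is identically $1$; it is primitive if its conductor is $(0)$. A character of $R$ with conductor $I$ factors through a primitive character of $R/I$. The Kloosterman sum over $S$ is $K(\phi,\psi)=\sum_{u\in S^\times}\phi(u)\psi(u^{-1})$. *)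

theory Defs
  imports Complex_Main
begin

definition r_ideal :: "'a::comm_ring_1 set \<Rightarrow> bool" where
  "r_ideal I \<longleftrightarrow> 0 \<in> I \<and> (\<forall>x\<in>I. \<forall>y\<in>I. x + y \<in> I) \<and> (\<forall>r. \<forall>x\<in>I. r * x \<in> I)"

definition r_maximal_ideal :: "'a::comm_ring_1 set \<Rightarrow> bool" where
  "r_maximal_ideal M \<longleftrightarrow> r_ideal M \<and> M \<noteq> UNIV \<and>
     (\<forall>J. r_ideal J \<and> M \<subseteq> J \<and> J \<noteq> UNIV \<longrightarrow> J = M)"

definition local_ring :: "'a::comm_ring_1 itself \<Rightarrow> bool" where
  "local_ring _ \<longleftrightarrow> (\<exists>!M::'a set. r_maximal_ideal M)"

definition additive_char :: "('a::comm_ring_1 \<Rightarrow> complex) \<Rightarrow> bool" where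
  "additive_char \<chi> \<longleftrightarrow> (\<forall>x. \<chi> x \<noteq> 0) \<and> (\<forall>x y. \<chi> (x + y) = \<chi> x * \<chi> y)"

definition trivial_char :: "('a::comm_ring_1 \<Rightarrow> complex) \<Rightarrow> bool" where
  "trivial_char \<chi> \<longleftrightarrow> (\<forall>x. \<chi> x = 1)"

definition is_conductor :: "('a::comm_ring_1 \<Rightarrow> complex) \<Rightarrow> 'a set \<Rightarrow> bool" where
  "is_conductor \<chi> I \<longleftrightarrow> r_ideal I \<and> (\<forall>x\<in>I. \<chi> x = 1) \<and>
     (\<forall>J. r_ideal J \<and> (\<forall>x\<in>J. \<chi> x = 1) \<longrightarrow> J \<subseteq> I)"

definition conductor :: "('a::comm_ring_1 \<Rightarrow> complex) \<Rightarrow> 'a set" where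
  "conductor \<chi> = (THE I. is_conductor \<chi> I)"

definition primitive_char :: "('a::comm_ring_1 \<Rightarrow> complex) \<Rightarrow> bool" where
  "primitive_char \<chi> \<longleftrightarrow> conductor \<chi> = {0}"

definition ring_units :: "'a::comm_ring_1 set" where
  "ring_units = {u. u dvd 1}"

definition unit_inv :: "'a::comm_ring_1 \<Rightarrow> 'a" where
  "unit_inv u = (THE v. u * v = 1)"

definition kloosterman ::
  "('a::comm_ring_1 \<Rightarrow> complex) \<Rightarrow> ('a \<Rightarrow> complex) \<Rightarrow> complex" where
  "kloosterman \<phi> \<psi> = (\<Sum>u\<in>ring_units. \<phi> u * \<psi> (unit_inv u))"

definition ring_hom_fun :: "('a::comm_ring_1 \<Rightarrow> 'b::comm_ring_1) \<Rightarrow> bool" where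
  "ring_hom_fun f \<longleftrightarrow> f 1 = 1 \<and> (\<forall>x y. f (x + y) = f x + f y) \<and> (\<forall>x y. f (x * y) = f x * f y)"

end

theory Submission
  imports Defs
begin

text \<open>
  In a finite local ring every proper ideal \<open>I\<close> lies in the maximal ideal, so \<open>1 + y\<close> is a unit
  for \<open>y \<in> I\<close>. If \<open>\<phi>\<close> is trivial on \<open>I\<close>, the substitution \<open>u \<mapsto> u (1 + y)\<inverse>\<close> leaves \<open>\<phi>(u)\<close>
  unchanged and multiplies \<open>\<psi>(u\<inverse>)\<close> by \<open>\<psi>(u\<inverse> y)\<close>; averaging over \<open>y \<in> I\<close> produces the factor
  \<open>\<Sum>\<^sub>y\<^sub>\<in>\<^sub>I \<psi>(y)\<close>, which vanishes as soon as \<open>\<psi>\<close> is non-trivial on \<open>I\<close>. Take \<open>I\<close> to be the conductor of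
  \<open>\<phi>\<close>: if \<open>\<psi>\<close> were trivial on it and \<open>\<phi>\<close> on the conductor of \<open>\<psi>\<close>, maximality would make
  the two conductors equal; since the Kloosterman sum is symmetric in \<open>\<phi>, \<psi>\<close>, (i) follows.
  For (ii), a unit of \<open>R\<close> is exactly a preimage of a unit of \<open>R/I\<close>, each such fibre is a coset
  of \<open>I\<close>, and the summand only depends on the image in \<open>R/I\<close>.
\<close>

lemma unit_inv_eqI: "(u::'a::comm_ring_1) * v = 1 \<Longrightarrow> unit_inv u = v"
  unfolding unit_inv_def
proof (rule the_equality)
  fix w assume "u * v = 1" "u * w = 1"
  then have "w = (u * w) * v" by (metis mult.assoc mult.commute mult_1_right)
  then show "w = v" using \<open>u * w = 1\<close> by simp
qed

lemma mult_unit_inv: "(u::'a::comm_ring_1) \<in> ring_units \<Longrightarrow> u * unit_inv u = 1"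
  unfolding ring_units_def by (elim CollectE dvdE) (simp add: unit_inv_eqI)

lemma unit_inv_in_units: "(u::'a::comm_ring_1) \<in> ring_units \<Longrightarrow> unit_inv u \<in> ring_units"
  using mult_unit_inv[of u] unfolding ring_units_def by (auto intro: dvdI[of _ _ u] simp: mult.commute)

lemma unit_inv_unit_inv: "(u::'a::comm_ring_1) \<in> ring_units \<Longrightarrow> unit_inv (unit_inv u) = u"
  by (metis mult.commute mult_unit_inv unit_inv_eqI)

lemma mult_in_units: "(u::'a::comm_ring_1) \<in> ring_units \<Longrightarrow> v \<in> ring_units \<Longrightarrow> u * v \<in> ring_units"
  unfolding ring_units_def using mult_dvd_mono[of u 1 v 1] by simp

lemma unit_inv_mult:
  assumes "(u::'a::comm_ring_1) \<in> ring_units" "v \<in> ring_units"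
  shows "unit_inv (u * v) = unit_inv u * unit_inv v"
proof (rule unit_inv_eqI)
  have "(u * v) * (unit_inv u * unit_inv v) = (u * unit_inv u) * (v * unit_inv v)"
    by (simp add: algebra_simps)
  then show "(u * v) * (unit_inv u * unit_inv v) = 1"
    using mult_unit_inv[OF assms(1)] mult_unit_inv[OF assms(2)] by simp
qed

lemma additive_char_add: "additive_char \<chi> \<Longrightarrow> \<chi> (a + b) = \<chi> a * \<chi> b"
  unfolding additive_char_def by blast

lemma additive_char_0: "additive_char \<chi> \<Longrightarrow> \<chi> 0 = 1"
  using additive_char_add[of \<chi> 0 0] unfolding additive_char_def by force

lemma r_ideal_add: "r_ideal I \<Longrightarrow> x \<in> I \<Longrightarrow> y \<in> I \<Longrightarrow> x + y \<in> I"
  unfolding r_ideal_def by blast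

lemma r_ideal_mult: "r_ideal I \<Longrightarrow> x \<in> I \<Longrightarrow> r * x \<in> I"
  unfolding r_ideal_def by blast

lemma r_ideal_diff: "r_ideal I \<Longrightarrow> x \<in> I \<Longrightarrow> y \<in> I \<Longrightarrow> x - y \<in> I"
  using r_ideal_add[of I x "(-1) * y"] r_ideal_mult[of I y "-1"] by simp

lemma r_ideal_principal: "r_ideal (range (\<lambda>r. a * r))"
  unfolding r_ideal_def
proof (intro conjI ballI allI)
  show "0 \<in> range (\<lambda>r. a * r)" by (rule range_eqI[where x=0]) simp
  fix x y c assume "x \<in> range (\<lambda>r. a * r)" "y \<in> range (\<lambda>r. a * r)"
  then obtain r s where "x = a * r" "y = a * s" by blast
  then show "x + y \<in> range (\<lambda>r. a * r)" "c * x \<in> range (\<lambda>r. a * r)"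
    by (auto intro: range_eqI[where x="r + s"] range_eqI[where x="c * r"]
        simp: distrib_left mult.left_commute)
qed

lemma r_ideal_UNIV_iff_one: "r_ideal I \<Longrightarrow> I = UNIV \<longleftrightarrow> 1 \<in> I"
  using r_ideal_mult[of I 1] by auto

lemma is_conductor_conductor:
  assumes "additive_char (\<chi>::'a::comm_ring_1 \<Rightarrow> complex)"
  shows "is_conductor \<chi> (conductor \<chi>)"
proof -
  define C where "C = {x. \<forall>r. \<chi> (r * x) = 1}"
  have "r_ideal C" unfolding r_ideal_def C_def
    using assms by (auto simp: additive_char_0 additive_char_add distrib_left mult.assoc[symmetric])
  moreover have "\<forall>x\<in>C. \<chi> x = 1" unfolding C_def by (auto dest: spec[of _ 1])
  moreover have "\<forall>J. r_ideal J \<and> (\<forall>x\<in>J. \<chi> x = 1) \<longrightarrow> J \<subseteq> C"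
    unfolding C_def r_ideal_def by auto
  ultimately have C: "is_conductor \<chi> C" unfolding is_conductor_def by blast
  moreover have "is_conductor \<chi> J \<Longrightarrow> J = C" for J
    using C unfolding is_conductor_def by blast
  ultimately show ?thesis unfolding conductor_def by (metis theI)
qed

lemma is_conductorD: "is_conductor \<chi> I \<Longrightarrow> r_ideal I" "is_conductor \<chi> I \<Longrightarrow> x \<in> I \<Longrightarrow> \<chi> x = 1"
  unfolding is_conductor_def by blast+

lemma is_conductor_maximal: "is_conductor \<chi> I \<Longrightarrow> r_ideal J \<Longrightarrow> \<forall>x\<in>J. \<chi> x = 1 \<Longrightarrow> J \<subseteq> I"
  unfolding is_conductor_def by blast

lemma conductor_ne_UNIV: "is_conductor \<chi> I \<Longrightarrow> \<not> trivial_char \<chi> \<Longrightarrow> I \<noteq> UNIV"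
  unfolding is_conductor_def trivial_char_def by auto

lemma r_ideal_subset_maximal:
  assumes "r_ideal (J::'a::{comm_ring_1,finite} set)" "J \<noteq> UNIV"
  obtains M where "r_maximal_ideal M" "J \<subseteq> M"
proof -
  define S where "S = {K::'a set. r_ideal K \<and> J \<subseteq> K \<and> K \<noteq> UNIV}"
  have "J \<in> S" using assms unfolding S_def by auto
  then have "Max (card ` S) \<in> card ` S" by (intro Max_in) auto
  then obtain K where K: "K \<in> S" "card K = Max (card ` S)" by auto
  have largest: "card L \<le> card K" if "L \<in> S" for L
    unfolding K(2) using that by (intro Max_ge) auto
  have "r_maximal_ideal K" unfolding r_maximal_ideal_def
  proof (intro conjI allI impI)
    show "r_ideal K" "K \<noteq> UNIV" using K unfolding S_def by auto
    fix L assume L: "r_ideal L \<and> K \<subseteq> L \<and> L \<noteq> UNIV"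
    then have "card L \<le> card K" using K(1) by (intro largest) (auto simp: S_def)
    then show "L = K" using L card_seteq[of L K] by auto
  qed
  then show ?thesis using K that unfolding S_def by auto
qed

lemma local_ring_proper_ideals_subset:
  assumes "local_ring TYPE('a::{comm_ring_1,finite})"
  obtains M :: "'a::{comm_ring_1,finite} set" where "r_ideal M" "1 \<notin> M"
    "\<And>J. r_ideal J \<Longrightarrow> J \<noteq> UNIV \<Longrightarrow> J \<subseteq> M"
proof -
  obtain M :: "'a set" where M: "r_maximal_ideal M" and uniq: "\<And>N. r_maximal_ideal N \<Longrightarrow> N = M"
    using assms unfolding local_ring_def by blast
  have "r_ideal M" "1 \<notin> M"
    using M r_ideal_UNIV_iff_one[of M] unfolding r_maximal_ideal_def by auto
  moreover have "J \<subseteq> M" if "r_ideal J" "J \<noteq> UNIV" for J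
    using r_ideal_subset_maximal[OF that] uniq by metis
  ultimately show ?thesis using that by blast
qed

lemma local_ring_one_plus_in_units:
  assumes "local_ring TYPE('a::{comm_ring_1,finite})"
    and "r_ideal (I::'a set)" "I \<noteq> UNIV" "y \<in> I"
  shows "1 + y \<in> ring_units"
proof (rule ccontr)
  obtain M :: "'a set" where M: "r_ideal M" "1 \<notin> M" and sub: "\<And>J. r_ideal J \<Longrightarrow> J \<noteq> UNIV \<Longrightarrow> J \<subseteq> M"
    using local_ring_proper_ideals_subset[OF assms(1)] by blast
  assume "1 + y \<notin> ring_units"
  then have "1 \<notin> range (\<lambda>r. (1 + y) * r)"
    unfolding ring_units_def by (auto simp: dvd_def)
  then have "range (\<lambda>r. (1 + y) * r) \<noteq> UNIV" by blast
  moreover have "1 + y \<in> range (\<lambda>r. (1 + y) * r)" by (rule range_eqI[where x=1]) simp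
  ultimately have "1 + y \<in> M" using sub[OF r_ideal_principal] by blast
  moreover have "y \<in> M" using sub assms(2-4) by blast
  ultimately have "(1 + y) - y \<in> M" by (rule r_ideal_diff[OF M(1)])
  then show False using M(2) by simp
qed

lemma sum_additive_char_r_ideal_eq_0:
  assumes "additive_char \<psi>" "r_ideal I" "finite I" "a \<in> I" "\<psi> a \<noteq> 1"
  shows "(\<Sum>y\<in>I. \<psi> y) = 0"
proof -
  have "(\<Sum>y\<in>I. \<psi> y) = (\<Sum>y\<in>I. \<psi> (a + y))"
    by (rule sum.reindex_bij_witness[where j="\<lambda>b. b - a" and i="\<lambda>b. a + b"])
       (use assms(2,4) in \<open>auto intro: r_ideal_add r_ideal_diff\<close>)
  also have "\<dots> = \<psi> a * (\<Sum>y\<in>I. \<psi> y)"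
    by (simp add: additive_char_add[OF assms(1)] sum_distrib_left)
  finally have "(1 - \<psi> a) * (\<Sum>y\<in>I. \<psi> y) = 0" by (simp add: algebra_simps)
  then show ?thesis using assms(5) by simp
qed

lemma sum_r_ideal_scale_unit:
  assumes "r_ideal I" "c \<in> ring_units"
  shows "(\<Sum>y\<in>I. f (c * y)) = (\<Sum>y\<in>I. f y)"
proof (rule sum.reindex_bij_witness[where i="\<lambda>b. unit_inv c * b" and j="\<lambda>b. c * b"])
  have c: "c * unit_inv c = 1" using mult_unit_inv[OF assms(2)] .
  fix b
  show "unit_inv c * (c * b) = b" "c * (unit_inv c * b) = b"
    using c by (simp_all add: mult.assoc[symmetric] mult.commute[of "unit_inv c" c])
  assume "b \<in> I"
  then show "unit_inv c * b \<in> I" "c * b \<in> I" using r_ideal_mult[OF assms(1)] by auto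
qed simp

lemma kloosterman_commute: "kloosterman \<phi> \<psi> = kloosterman \<psi> (\<phi>::'a::comm_ring_1 \<Rightarrow> complex)"
  unfolding kloosterman_def
  by (rule sum.reindex_bij_witness[where i=unit_inv and j=unit_inv])
     (auto simp: unit_inv_unit_inv unit_inv_in_units)

lemma kloosterman_shift:
  assumes "local_ring TYPE('a::{comm_ring_1,finite})"
    and "additive_char (\<phi>::'a \<Rightarrow> complex)" "additive_char \<psi>"
    and I: "r_ideal I" "I \<noteq> UNIV" and \<phi>_I: "\<forall>x\<in>I. \<phi> x = 1" and "y \<in> I"
  shows "kloosterman \<phi> \<psi> = (\<Sum>u\<in>ring_units. \<phi> u * \<psi> (unit_inv u) * \<psi> (unit_inv u * y))"
proof -
  have y1: "1 + y \<in> ring_units"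
    by (rule local_ring_one_plus_in_units[OF assms(1) I \<open>y \<in> I\<close>])
  define w where "w = unit_inv (1 + y)"
  have w: "(1 + y) * w = 1" "w \<in> ring_units" "unit_inv w = 1 + y"
    unfolding w_def using mult_unit_inv unit_inv_in_units unit_inv_unit_inv y1 by blast+
  have "kloosterman \<phi> \<psi> = (\<Sum>u\<in>ring_units. \<phi> (u * w) * \<psi> (unit_inv (u * w)))"
    unfolding kloosterman_def
  proof (rule sum.reindex_bij_witness[where i="\<lambda>b. b * w" and j="\<lambda>a. a * (1 + y)"])
    fix a :: 'a
    show "a * (1 + y) * w = a" "a * w * (1 + y) = a"
      using w(1) by (simp_all add: mult.assoc mult.commute[of w])
    then show "\<phi> (a * (1 + y) * w) * \<psi> (unit_inv (a * (1 + y) * w)) = \<phi> a * \<psi> (unit_inv a)"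
      by simp
    assume "a \<in> ring_units"
    then show "a * (1 + y) \<in> ring_units" "a * w \<in> ring_units"
      using y1 w(2) mult_in_units by auto
  qed
  also have "\<dots> = (\<Sum>u\<in>ring_units. \<phi> u * \<psi> (unit_inv u) * \<psi> (unit_inv u * y))"
  proof (rule sum.cong[OF refl])
    fix u :: 'a assume u: "u \<in> ring_units"
    have "unit_inv (u * w) = unit_inv u + unit_inv u * y"
      using unit_inv_mult[OF u w(2)] w(3) by (simp add: distrib_left)
    then have \<psi>_uw: "\<psi> (unit_inv (u * w)) = \<psi> (unit_inv u) * \<psi> (unit_inv u * y)"
      by (simp add: additive_char_add[OF assms(3)])
    have "u * w + (u * w) * y = u * ((1 + y) * w)" by (simp add: algebra_simps)
    then have u_split: "u * w + (u * w) * y = u" using w(1) by simp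
    have "\<phi> u = \<phi> (u * w) * \<phi> ((u * w) * y)"
      using additive_char_add[OF assms(2), of "u * w" "u * w * y"] unfolding u_split .
    then have "\<phi> (u * w) = \<phi> u" using \<phi>_I r_ideal_mult[OF I(1) \<open>y \<in> I\<close>] by simp
    then show "\<phi> (u * w) * \<psi> (unit_inv (u * w)) = \<phi> u * \<psi> (unit_inv u) * \<psi> (unit_inv u * y)"
      using \<psi>_uw by simp
  qed
  finally show ?thesis .
qed

lemma kloosterman_eq_0_if_trivial_on_ideal:
  assumes "local_ring TYPE('a::{comm_ring_1,finite})"
    and "additive_char (\<phi>::'a \<Rightarrow> complex)" "additive_char \<psi>"
    and I: "r_ideal I" "I \<noteq> UNIV" and "\<forall>x\<in>I. \<phi> x = 1" and "a \<in> I" "\<psi> a \<noteq> 1"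
  shows "kloosterman \<phi> \<psi> = 0"
proof -
  have "of_nat (card I) * kloosterman \<phi> \<psi> = (\<Sum>y\<in>I. kloosterman \<phi> \<psi>)" by simp
  also have "\<dots> = (\<Sum>y\<in>I. \<Sum>u\<in>ring_units. \<phi> u * \<psi> (unit_inv u) * \<psi> (unit_inv u * y))"
    using kloosterman_shift[OF assms(1-6)] by (intro sum.cong) auto
  also have "\<dots> = (\<Sum>u\<in>ring_units. \<phi> u * \<psi> (unit_inv u) * (\<Sum>y\<in>I. \<psi> (unit_inv u * y)))"
    by (subst sum.swap) (simp add: sum_distrib_left)
  also have "\<dots> = 0"
    using sum_r_ideal_scale_unit[OF I(1) unit_inv_in_units, of _ \<psi>]
      sum_additive_char_r_ideal_eq_0[OF assms(3) I(1) finite assms(7,8)]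
    by (intro sum.neutral) auto
  finally have "of_nat (card I) * kloosterman \<phi> \<psi> = 0" .
  moreover have "card I \<noteq> 0" using I(1) unfolding r_ideal_def by auto
  ultimately show ?thesis by simp
qed

theorem kloosterman_eq_0_if_conductors_differ:
  assumes "local_ring TYPE('a::{comm_ring_1,finite})"
    and "additive_char (\<phi>::'a \<Rightarrow> complex)" "additive_char \<psi>"
    and "\<not> trivial_char \<phi>" "\<not> trivial_char \<psi>"
    and "conductor \<phi> \<noteq> conductor \<psi>"
  shows "kloosterman \<phi> \<psi> = 0"
proof -
  have c\<phi>: "is_conductor \<phi> (conductor \<phi>)" and c\<psi>: "is_conductor \<psi> (conductor \<psi>)"
    using is_conductor_conductor assms(2,3) by blast+
  note c\<phi>D = is_conductorD[OF c\<phi>] and c\<psi>D = is_conductorD[OF c\<psi>]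
  have "\<not> (\<forall>x\<in>conductor \<phi>. \<psi> x = 1) \<or> \<not> (\<forall>x\<in>conductor \<psi>. \<phi> x = 1)"
    using is_conductor_maximal[OF c\<phi> c\<psi>D(1)] is_conductor_maximal[OF c\<psi> c\<phi>D(1)] assms(6)
    by blast
  then show ?thesis
  proof
    assume "\<not> (\<forall>x\<in>conductor \<phi>. \<psi> x = 1)"
    then show ?thesis
      using kloosterman_eq_0_if_trivial_on_ideal[OF assms(1-3) c\<phi>D(1)]
        conductor_ne_UNIV[OF c\<phi> assms(4)] c\<phi>D(2) by blast
  next
    assume "\<not> (\<forall>x\<in>conductor \<psi>. \<phi> x = 1)"
    then have "kloosterman \<psi> \<phi> = 0"
      using kloosterman_eq_0_if_trivial_on_ideal[OF assms(1,3,2) c\<psi>D(1)]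
        conductor_ne_UNIV[OF c\<psi> assms(5)] c\<psi>D(2) by blast
    then show ?thesis by (simp add: kloosterman_commute)
  qed
qed

lemma ring_hom_fun_simps:
  assumes "ring_hom_fun (\<pi>::'a::comm_ring_1 \<Rightarrow> 'b::comm_ring_1)"
  shows "\<pi> 1 = 1" "\<pi> (x + y) = \<pi> x + \<pi> y" "\<pi> (x * y) = \<pi> x * \<pi> y"
    "\<pi> 0 = 0" "\<pi> (x - y) = \<pi> x - \<pi> y"
proof -
  show add: "\<pi> (x + y) = \<pi> x + \<pi> y" for x y using assms unfolding ring_hom_fun_def by blast
  show "\<pi> 1 = 1" "\<pi> (x * y) = \<pi> x * \<pi> y" using assms unfolding ring_hom_fun_def by blast+
  show "\<pi> 0 = 0" using add[of 0 0] by simp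
  show "\<pi> (x - y) = \<pi> x - \<pi> y" using add[of "x - y" y] by (simp add: eq_diff_eq)
qed

lemma r_ideal_ring_hom_kernel:
  assumes "ring_hom_fun (\<pi>::'a::comm_ring_1 \<Rightarrow> 'b::comm_ring_1)"
  shows "r_ideal {x. \<pi> x = 0}"
  unfolding r_ideal_def by (simp add: ring_hom_fun_simps[OF assms])

lemma ring_hom_fun_unit_inv:
  assumes "ring_hom_fun \<pi>" "u \<in> ring_units"
  shows "\<pi> u \<in> ring_units" "\<pi> (unit_inv u) = unit_inv (\<pi> u)"
proof -
  have "\<pi> u * \<pi> (unit_inv u) = \<pi> (u * unit_inv u)" by (simp add: ring_hom_fun_simps[OF assms(1)])
  then have "\<pi> u * \<pi> (unit_inv u) = 1"
    using mult_unit_inv[OF assms(2)] ring_hom_fun_simps(1)[OF assms(1)] by simp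
  then show "\<pi> u \<in> ring_units" "\<pi> (unit_inv u) = unit_inv (\<pi> u)"
    unfolding ring_units_def by (auto intro: dvdI unit_inv_eqI[symmetric])
qed

lemma local_ring_units_preimage:
  assumes "local_ring TYPE('a::{comm_ring_1,finite})"
    and "ring_hom_fun (\<pi>::'a \<Rightarrow> 'b::comm_ring_1)" "surj \<pi>"
    and "{x. \<pi> x = 0} \<noteq> UNIV" and "\<pi> z \<in> ring_units"
  shows "z \<in> ring_units"
proof -
  obtain x where "\<pi> x = unit_inv (\<pi> z)" using surjD[OF assms(3)] by metis
  then have "\<pi> (z * x - 1) = 0"
    using mult_unit_inv[OF assms(5)] by (simp add: ring_hom_fun_simps[OF assms(2)])
  then have "1 + (z * x - 1) \<in> ring_units"
    using local_ring_one_plus_in_units[OF assms(1) r_ideal_ring_hom_kernel[OF assms(2)] assms(4)]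
    by blast
  then show ?thesis unfolding ring_units_def by (simp add: dvd_mult_left)
qed

lemma units_fibre_eq_coset:
  assumes "local_ring TYPE('a::{comm_ring_1,finite})"
    and "ring_hom_fun (\<pi>::'a \<Rightarrow> 'b::comm_ring_1)" "surj \<pi>"
    and ker: "{x. \<pi> x = 0} = I" and "I \<noteq> UNIV"
    and "v \<in> ring_units" "\<pi> u0 = v"
  shows "{u \<in> ring_units. \<pi> u = v} = (\<lambda>i. u0 + i) ` I"
proof (intro set_eqI iffI)
  fix u assume "u \<in> {u \<in> ring_units. \<pi> u = v}"
  then have "u - u0 \<in> I" using assms(7) ker by (auto simp: ring_hom_fun_simps[OF assms(2)])
  then show "u \<in> (\<lambda>i. u0 + i) ` I" by (rule rev_image_eqI) simp
next
  fix u assume "u \<in> (\<lambda>i. u0 + i) ` I"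
  then have "\<pi> u = v" using assms(7) ker by (auto simp: ring_hom_fun_simps[OF assms(2)])
  then show "u \<in> {u \<in> ring_units. \<pi> u = v}"
    using local_ring_units_preimage[OF assms(1-3)] assms(5,6) ker by auto
qed

theorem kloosterman_quotient:
  assumes "local_ring TYPE('a::{comm_ring_1,finite})"
    and "ring_hom_fun (\<pi>::'a \<Rightarrow> 'b::comm_ring_1)" "surj \<pi>"
    and "{x. \<pi> x = 0} = I" "I \<noteq> UNIV"
  shows "kloosterman (\<phi>' \<circ> \<pi>) (\<psi>' \<circ> \<pi>) = of_nat (card I) * kloosterman \<phi>' \<psi>'"
proof -
  have "finite (range \<pi>)" by simp
  then have "finite (UNIV :: 'b set)" using assms(3) by simp
  then have fin: "finite (A :: 'b set)" for A by (rule finite_subset[OF subset_UNIV])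
  define f where "f v = \<phi>' v * \<psi>' (unit_inv v)" for v
  have "kloosterman (\<phi>' \<circ> \<pi>) (\<psi>' \<circ> \<pi>) = (\<Sum>u\<in>ring_units. f (\<pi> u))"
    unfolding kloosterman_def f_def using ring_hom_fun_unit_inv[OF assms(2)] by (intro sum.cong) auto
  also have "\<dots> = (\<Sum>v\<in>ring_units. \<Sum>u\<in>{u \<in> ring_units. \<pi> u = v}. f (\<pi> u))"
    by (rule sum.group[symmetric]) (use fin ring_hom_fun_unit_inv[OF assms(2)] in auto)
  also have "\<dots> = (\<Sum>v\<in>ring_units. of_nat (card I) * f v)"
  proof (rule sum.cong[OF refl])
    fix v :: 'b assume v: "v \<in> ring_units"
    obtain u0 where "\<pi> u0 = v" using surjD[OF assms(3)] by metis
    then have "card {u \<in> ring_units. \<pi> u = v} = card I"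
      using units_fibre_eq_coset[OF assms v] card_image[of "\<lambda>i. u0 + i" I] by (simp add: inj_on_def)
    then show "(\<Sum>u\<in>{u \<in> ring_units. \<pi> u = v}. f (\<pi> u)) = of_nat (card I) * f v" by simp
  qed
  also have "\<dots> = of_nat (card I) * kloosterman \<phi>' \<psi>'"
    unfolding kloosterman_def f_def by (simp add: sum_distrib_left)
  finally show ?thesis .
qed

theorem mainTheorem14:
  fixes \<phi> \<psi> :: "'a::{comm_ring_1,finite} \<Rightarrow> complex"
  assumes "local_ring TYPE('a)"
    and "additive_char \<phi>" and "additive_char \<psi>"
    and "\<not> trivial_char \<phi>" and "\<not> trivial_char \<psi>"
  shows "(conductor \<phi> \<noteq> conductor \<psi> \<longrightarrow> kloosterman \<phi> \<psi> = 0) \<and>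
         (\<forall>(I::'a set) (\<pi>::'a \<Rightarrow> 'b::comm_ring_1) \<phi>' \<psi>'.
           conductor \<phi> = I \<and> conductor \<psi> = I \<and>
           ring_hom_fun \<pi> \<and> surj \<pi> \<and> {x. \<pi> x = 0} = I \<and>
           additive_char \<phi>' \<and> additive_char \<psi>' \<and>
           primitive_char \<phi>' \<and> primitive_char \<psi>' \<and>
           \<phi> = \<phi>' \<circ> \<pi> \<and> \<psi> = \<psi>' \<circ> \<pi> \<longrightarrow>
           kloosterman \<phi> \<psi> = of_nat (card I) * kloosterman \<phi>' \<psi>')"
proof (intro conjI impI allI)
  show "kloosterman \<phi> \<psi> = 0" if "conductor \<phi> \<noteq> conductor \<psi>"
    using kloosterman_eq_0_if_conductors_differ[OF assms that] .
  fix I :: "'a set" and \<pi> :: "'a \<Rightarrow> 'b" and \<phi>' \<psi>'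
  assume h: "conductor \<phi> = I \<and> conductor \<psi> = I \<and>
           ring_hom_fun \<pi> \<and> surj \<pi> \<and> {x. \<pi> x = 0} = I \<and>
           additive_char \<phi>' \<and> additive_char \<psi>' \<and>
           primitive_char \<phi>' \<and> primitive_char \<psi>' \<and>
           \<phi> = \<phi>' \<circ> \<pi> \<and> \<psi> = \<psi>' \<circ> \<pi>"
  then have "I \<noteq> UNIV"
    using conductor_ne_UNIV[OF is_conductor_conductor[OF assms(2)] assms(4)] by blast
  with h show "kloosterman \<phi> \<psi> = of_nat (card I) * kloosterman \<phi>' \<psi>'"
    using kloosterman_quotient[OF assms(1), of \<pi> I \<phi>' \<psi>'] by auto
qed

end
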